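(* Let $m\ge 1$ and $n=2^m$. Consider the algorithm $\textsc{MergeShuffle}$ on an array $T$ of $n$ elements with cut-off $k=m$: $T$ is divided into $2^m$ blocks of size $1$ (each trivially shuffled, with no random bits used), and then for $p=0,1,\dots,m-1$ each pair of adjacent blocks of size $2^p$ is merged into a block of size $2^{p+1}$ by the procedure $\textsc{Merge}$ (defined in the context). Then the expected total number of random bits used is $n\log_2 n+\Theta(n)$ as $n\to\infty$.
   Context: The procedure $\textsc{Merge}(T,s,n_1,n_2)$: set $i\gets s$, $j\gets s+n_1$, $n\gets s+n_1+n_2$. Repeat: draw an independent fair random bit; if it is $0$, then break out of the loop if $i=j$; if it is $1$, then break out of the loop if $j=n$, and otherwise swap $T[i]$ and $T[j]$ and set $j\gets j+1$; in either non-breaking case set $i\gets i+1$. After the loop, while $i<n$: draw an integer $m$ uniformly at random from $\{s,\dots,i\}$ (independently of everything else), swap $T[i]$ and $T[m]$, and set $i\gets i+1$. Cost model: each fair bit drawn costs one random bit, and drawing a uniform integer from a set of $K$ elements costs $\lceil \log_2 K\rceil$ random bits. *)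

theory Defs
  imports "HOL-Probability.Probability" "HOL-Library.Landau_Symbols"
begin

text \<open>Random-bit cost of drawing a uniform integer from a set of K elements.\<close>
definition unif_cost :: "nat \<Rightarrow> nat" where
  "unif_cost K = nat \<lceil>log 2 (real K)\<rceil>"

definition fair_bit :: "nat pmf" where
  "fair_bit = pmf_of_set {0, 1}"

text \<open>Cost of the final loop of Merge: for i' = i, ..., n-1 a uniform integer
  is drawn from {s..i'}, which has i' - s + 1 elements.\<close>
definition merge_tail_cost :: "nat \<Rightarrow> nat \<Rightarrow> nat \<Rightarrow> nat" where
  "merge_tail_cost s n i = (\<Sum>i'\<in>{i..<n}. unif_cost (i' - s + 1))"

text \<open>Distribution of the number of random bits consumed by the main loop of Merge
  (and everything after) from state (i, j), with fixed s and n.  The array contents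
  do not influence the number of random bits, so they are not tracked.
  Outside the invariant s \<le> i \<le> j \<le> n (never reached) we return 0.\<close>
function merge_loop_cost :: "nat \<Rightarrow> nat \<Rightarrow> nat \<Rightarrow> nat \<Rightarrow> nat pmf" where
  "merge_loop_cost s n i j =
     (if \<not> (s \<le> i \<and> i \<le> j \<and> j \<le> n) then return_pmf 0 else
      bind_pmf fair_bit (\<lambda>b.
        if b = 0 then
          (if i = j then return_pmf (1 + merge_tail_cost s n i)
           else map_pmf (\<lambda>c. 1 + c) (merge_loop_cost s n (i + 1) j))
        else
          (if j = n then return_pmf (1 + merge_tail_cost s n i)
           else map_pmf (\<lambda>c. 1 + c) (merge_loop_cost s n (i + 1) (j + 1)))))"
  by pat_completeness auto
termination
  by (relation "Wellfounded.measure (\<lambda>(s, n, i, j). n - i)") auto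

definition merge_cost :: "nat \<Rightarrow> nat \<Rightarrow> nat \<Rightarrow> nat pmf" where
  "merge_cost s n1 n2 = merge_loop_cost s (s + n1 + n2) s (s + n1)"

text \<open>Sum of the costs of the merges of pass p (blocks of size 2^p, n = 2^m):
  blocks are merged one after another with fresh independent randomness;
  the q-th merge (q < k) starts at position q * 2^(p+1).\<close>
fun pass_cost :: "nat \<Rightarrow> nat \<Rightarrow> nat pmf" where
  "pass_cost p 0 = return_pmf 0"
| "pass_cost p (Suc q) =
     bind_pmf (pass_cost p q) (\<lambda>x.
       map_pmf (\<lambda>y. x + y) (merge_cost (q * 2 ^ (p + 1)) (2 ^ p) (2 ^ p)))"

text \<open>Total random bits used by MergeShuffle on n = 2^m elements with cut-off k = m:
  blocks of size 1 cost nothing, then passes p = 0, ..., m-1.\<close>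
fun passes_cost :: "nat \<Rightarrow> nat \<Rightarrow> nat pmf" where
  "passes_cost m 0 = return_pmf 0"
| "passes_cost m (Suc p) =
     bind_pmf (passes_cost m p) (\<lambda>x.
       map_pmf (\<lambda>y. x + y) (pass_cost p (2 ^ (m - Suc p))))"

definition mergeshuffle_cost :: "nat \<Rightarrow> nat pmf" where
  "mergeshuffle_cost m = passes_cost m m"

end

theory Submission
  imports Defs
begin

text \<open>
  Every iteration of either loop of Merge advances \<open>i\<close>, and the main loop draws one more
  bit when it stops, so merging two blocks of size \<open>2^p\<close> costs at least \<open>2^(p+1) + 1\<close>
  bits and at most \<open>2^(p+1) + 1 + p R\<close>, where \<open>R\<close> is the number of iterations of the
  final loop, each costing at most \<open>p + 1\<close> bits. The pair \<open>(x, y) = (j - i, n - j)\<close>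
  performs a simple random walk until a coordinate vanishes, and then \<open>R\<close> is the other
  coordinate. As \<open>(x - y)\<^sup>2 + x + y\<close> is a martingale for this walk and
  \<open>R \<le> (R\<^sup>2 + R + t\<^sup>2) / (2 t)\<close>, the potential \<open>((x - y)\<^sup>2 + x + y + t\<^sup>2) / (2 t)\<close>
  dominates \<open>E R\<close>; for \<open>x = y = 2^p\<close> and \<open>t = \<surd>(2^(p+1))\<close> it equals \<open>\<surd>(2^(p+1))\<close>.
  Pass \<open>p\<close> consists of \<open>2^(m-p-1)\<close> merges, so the excess of the total over \<open>m 2^m\<close> lies
  between \<open>2^(m-1)\<close> and \<open>2^m \<Sum>\<^sub>p (p + 1) / \<surd>2^(p+1) = O(2^m)\<close>.
\<close>

lemma unif_cost_le:
  assumes "1 \<le> K" "K \<le> 2 ^ q"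
  shows "unif_cost K \<le> q"
proof -
  have "log 2 (real K) \<le> log 2 (2 ^ q)"
    using assms by (subst log_le_cancel_iff) auto
  then have "\<lceil>log 2 (real K)\<rceil> \<le> int q"
    by (intro ceiling_le) (simp add: log_pow_cancel)
  then show ?thesis
    unfolding unif_cost_def by (subst nat_le_iff)
qed

lemma unif_cost_ge_1:
  assumes "2 \<le> K"
  shows "1 \<le> unif_cost K"
proof -
  have "0 < log 2 (real K)"
    using assms by simp
  then have "1 \<le> \<lceil>log 2 (real K)\<rceil>"
    by (simp add: one_le_ceiling)
  then show ?thesis
    unfolding unif_cost_def by linarith
qed

lemma merge_tail_cost_le:
  assumes "n - s \<le> 2 ^ q" "s \<le> i"
  shows "merge_tail_cost s n i \<le> (n - i) * q"
proof -
  have "merge_tail_cost s n i \<le> (\<Sum>i'\<in>{i..<n}. q)"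
    unfolding merge_tail_cost_def by (intro sum_mono unif_cost_le) (use assms in auto)
  then show ?thesis
    by simp
qed

lemma merge_tail_cost_ge:
  assumes "s < i"
  shows "n - i \<le> merge_tail_cost s n i"
proof -
  have "(\<Sum>i'\<in>{i..<n}. 1) \<le> merge_tail_cost s n i"
    unfolding merge_tail_cost_def by (intro sum_mono unif_cost_ge_1) (use assms in auto)
  then show ?thesis
    by simp
qed

lemma set_pmf_fair_bit [simp]: "set_pmf fair_bit = {0, 1}"
  by (simp add: fair_bit_def)

lemma expectation_bind_fair_bit:
  assumes "\<And>b. finite (set_pmf (g b))"
  shows "measure_pmf.expectation (bind_pmf fair_bit g) (f :: nat \<Rightarrow> real)
           = (measure_pmf.expectation (g 0) f + measure_pmf.expectation (g 1) f) / 2"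
  unfolding fair_bit_def by (subst pmf_expectation_bind_pmf_of_set) (auto simp: assms)

lemma expectation_add_const:
  fixes f :: "'a \<Rightarrow> real"
  assumes "finite (set_pmf M)"
  shows "measure_pmf.expectation M (\<lambda>x. c + f x) = c + measure_pmf.expectation M f"
  using assms by (subst Bochner_Integration.integral_add) (auto intro: integrable_measure_pmf_finite)

lemma expectation_bind_add:
  assumes "finite (set_pmf A)" "finite (set_pmf B)"
  shows "measure_pmf.expectation (bind_pmf A (\<lambda>x. map_pmf (\<lambda>y. x + y) B)) real
           = measure_pmf.expectation A real + measure_pmf.expectation B real"
proof -
  have "measure_pmf.expectation (bind_pmf A (\<lambda>x. map_pmf (\<lambda>y. x + y) B)) real
          = (\<Sum>a\<in>set_pmf A. pmf A a * real a + pmf A a * measure_pmf.expectation B real)"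
    using assms by (subst pmf_expectation_bind) (auto simp: expectation_add_const algebra_simps)
  also have "\<dots> = measure_pmf.expectation A real + measure_pmf.expectation B real"
    using assms by (simp add: sum.distrib flip: sum_distrib_right)
      (simp add: sum_pmf_eq_1 integral_measure_pmf[of "set_pmf A"])
  finally show ?thesis .
qed

declare merge_loop_cost.simps [simp del]

lemma finite_set_pmf_merge_loop_cost: "finite (set_pmf (merge_loop_cost s n i j))"
proof (induction s n i j rule: merge_loop_cost.induct)
  case (1 s n i j)
  then show ?case
    by (subst merge_loop_cost.simps) auto
qed

lemma finite_set_pmf_pass_cost: "finite (set_pmf (pass_cost p k))"
  by (induction k) (auto simp: merge_cost_def finite_set_pmf_merge_loop_cost)

lemma finite_set_pmf_passes_cost: "finite (set_pmf (passes_cost m p))"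
  by (induction p) (auto simp: finite_set_pmf_pass_cost)

lemma expectation_merge_loop_cost:
  assumes "s \<le> i" "i \<le> j" "j \<le> n"
  shows "measure_pmf.expectation (merge_loop_cost s n i j) real =
     ((if i = j then 1 + real (merge_tail_cost s n i)
       else 1 + measure_pmf.expectation (merge_loop_cost s n (i + 1) j) real)
    + (if j = n then 1 + real (merge_tail_cost s n i)
       else 1 + measure_pmf.expectation (merge_loop_cost s n (i + 1) (j + 1)) real)) / 2"
  using assms unfolding merge_loop_cost.simps[of s n i j]
  by (subst if_not_P, simp, subst expectation_bind_fair_bit)
     (auto simp: finite_set_pmf_merge_loop_cost expectation_add_const)

definition merge_potential :: "real \<Rightarrow> nat \<Rightarrow> nat \<Rightarrow> real" where
  "merge_potential t x y = ((real x - real y)\<^sup>2 + real x + real y + t\<^sup>2) / (2 * t)"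

lemma merge_potential_step:
  assumes "0 < t"
  shows "((if x = 0 then real y else merge_potential t (x - 1) y)
         + (if y = 0 then real x else merge_potential t x (y - 1))) / 2 \<le> merge_potential t x y"
proof -
  have boundary: "(real (Suc z) + merge_potential t 0 z) / 2 \<le> merge_potential t 0 (Suc z)" for z
  proof -
    have "merge_potential t 0 (Suc z) - (real (Suc z) + merge_potential t 0 z) / 2
            = ((real z + 1 - t)\<^sup>2 + 3 * (real z + 1)) / (4 * t)"
      using assms unfolding merge_potential_def by (simp add: field_simps power2_eq_square)
    also have "\<dots> \<ge> 0"
      using assms by (intro divide_nonneg_pos) auto
    finally show ?thesis by simp
  qed
  have symmetric: "merge_potential t x y = merge_potential t y x" for x y
    unfolding merge_potential_def by (simp add: power2_commute add_ac)
  show ?thesis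
  proof (cases x; cases y)
    assume "x = 0" "y = 0"
    then show ?thesis
      using assms by (simp add: merge_potential_def)
  next
    fix y' assume "x = 0" "y = Suc y'"
    then show ?thesis
      using boundary[of y'] by simp
  next
    fix x' assume "x = Suc x'" "y = 0"
    then show ?thesis
      using boundary[of x'] symmetric[of x' 0] symmetric[of "Suc x'" 0] by (simp add: add.commute)
  next
    fix x' y' assume "x = Suc x'" "y = Suc y'"
    moreover have "(merge_potential t x' (Suc y') + merge_potential t (Suc x') y') / 2
                     = merge_potential t (Suc x') (Suc y')"
      using assms unfolding merge_potential_def by (simp add: field_simps power2_eq_square)
    ultimately show ?thesis
      by simp
  qed
qed

lemma merge_loop_cost_expectation_le:
  assumes "n - s \<le> 2 ^ q" "1 \<le> q" "0 < t" "s \<le> i" "i \<le> j" "j \<le> n"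
  shows "measure_pmf.expectation (merge_loop_cost s n i j) real
           \<le> real (n - i) + 1 + (real q - 1) * merge_potential t (j - i) (n - j)"
  using assms
proof (induction s n i j rule: merge_loop_cost.induct)
  case (1 s n i j)
  define Q where "Q = real q - 1"
  define B where "B u = real (n - i) + 1 + Q * u" for u
  have "0 \<le> Q"
    using "1.prems" unfolding Q_def by simp
  have "merge_tail_cost s n i \<le> (n - i) * q"
    using "1.prems" by (intro merge_tail_cost_le)
  then have "real (merge_tail_cost s n i) \<le> real (n - i) * real q"
    by (metis of_nat_le_iff of_nat_mult)
  then have tail: "1 + real (merge_tail_cost s n i) \<le> B (real (n - i))"
    unfolding B_def Q_def by (simp add: algebra_simps)
  have left: "(if i = j then 1 + real (merge_tail_cost s n i)
               else 1 + measure_pmf.expectation (merge_loop_cost s n (i + 1) j) real)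
              \<le> B (if j - i = 0 then real (n - j) else merge_potential t (j - i - 1) (n - j))"
    using tail "1.IH"(1)[of 0] "1.prems" by (auto simp: B_def Q_def Suc_diff_Suc)
  have right: "(if j = n then 1 + real (merge_tail_cost s n i)
                else 1 + measure_pmf.expectation (merge_loop_cost s n (i + 1) (j + 1)) real)
               \<le> B (if n - j = 0 then real (j - i) else merge_potential t (j - i) (n - j - 1))"
    using tail "1.IH"(2)[of 1] "1.prems" by (auto simp: B_def Q_def Suc_diff_Suc)
  have "Q * ((if j - i = 0 then real (n - j) else merge_potential t (j - i - 1) (n - j))
            + (if n - j = 0 then real (j - i) else merge_potential t (j - i) (n - j - 1))) / 2
        \<le> Q * merge_potential t (j - i) (n - j)"
    using merge_potential_step[of t "j - i" "n - j"] \<open>0 \<le> Q\<close> "1.prems"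
    by (simp add: mult_left_mono flip: times_divide_eq_right)
  then show ?case
    using left right "1.prems" expectation_merge_loop_cost[of s i j n]
    unfolding B_def Q_def by (simp add: field_simps)
qed

(* The last hypothesis excludes stopping at i = s, where the first draw of the final loop
   is from a singleton and costs nothing. *)
lemma merge_loop_cost_expectation_ge:
  assumes "s \<le> i" "i \<le> j" "j \<le> n" "s < i \<or> i < j \<and> j < n"
  shows "real (n - i) + 1 \<le> measure_pmf.expectation (merge_loop_cost s n i j) real"
  using assms
proof (induction s n i j rule: merge_loop_cost.induct)
  case (1 s n i j)
  have left: "real (n - i) + 1 \<le> (if i = j then 1 + real (merge_tail_cost s n i)
               else 1 + measure_pmf.expectation (merge_loop_cost s n (i + 1) j) real)"
    using merge_tail_cost_ge[of s i n] "1.IH"(1)[of 0] "1.prems" by (auto simp: Suc_diff_Suc)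
  have right: "real (n - i) + 1 \<le> (if j = n then 1 + real (merge_tail_cost s n i)
                else 1 + measure_pmf.expectation (merge_loop_cost s n (i + 1) (j + 1)) real)"
    using merge_tail_cost_ge[of s i n] "1.IH"(2)[of 1] "1.prems" by (auto simp: Suc_diff_Suc)
  show ?case
    using left right "1.prems" expectation_merge_loop_cost[of s i j n] by simp
qed

lemma merge_cost_expectation_le:
  "measure_pmf.expectation (merge_cost s (2 ^ p) (2 ^ p)) real
     \<le> 2 ^ (p + 1) + 1 + real p * sqrt (2 ^ (p + 1))"
proof -
  define t where "t = sqrt (2 ^ (p + 1) :: real)"
  have "0 < t"
    unfolding t_def by simp
  have "merge_potential t (2 ^ p) (2 ^ p) = t"
    unfolding merge_potential_def t_def by (simp add: real_div_sqrt)
  then show ?thesis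
    using merge_loop_cost_expectation_le[of "s + 2 ^ p + 2 ^ p" s "p + 1" t s "s + 2 ^ p"] \<open>0 < t\<close>
    unfolding merge_cost_def t_def by simp
qed

lemma merge_cost_expectation_ge:
  "2 ^ (p + 1) + 1 \<le> measure_pmf.expectation (merge_cost s (2 ^ p) (2 ^ p)) real"
  using merge_loop_cost_expectation_ge[of s s "s + 2 ^ p" "s + 2 ^ p + 2 ^ p"]
  unfolding merge_cost_def by simp

lemma pass_cost_expectation:
  "measure_pmf.expectation (pass_cost p k) real
     = (\<Sum>q<k. measure_pmf.expectation (merge_cost (q * 2 ^ (p + 1)) (2 ^ p) (2 ^ p)) real)"
  by (induction k)
     (simp_all add: expectation_bind_add finite_set_pmf_pass_cost merge_cost_def finite_set_pmf_merge_loop_cost)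

lemma passes_cost_expectation:
  "measure_pmf.expectation (passes_cost m p) real
     = (\<Sum>p'<p. measure_pmf.expectation (pass_cost p' (2 ^ (m - Suc p'))) real)"
  by (induction p) (simp_all add: expectation_bind_add finite_set_pmf_pass_cost finite_set_pmf_passes_cost)

lemma pass_cost_expectation_ge:
  "real k * (2 ^ (p + 1) + 1) \<le> measure_pmf.expectation (pass_cost p k) real"
  using sum_mono[of "{..<k}" "\<lambda>_. 2 ^ (p + 1) + 1", OF merge_cost_expectation_ge]
  by (simp add: pass_cost_expectation)

lemma pass_cost_expectation_le:
  "measure_pmf.expectation (pass_cost p k) real
     \<le> real k * (2 ^ (p + 1) + 1 + real p * sqrt (2 ^ (p + 1)))"
  using sum_mono[of "{..<k}" _ "\<lambda>_. 2 ^ (p + 1) + 1 + real p * sqrt (2 ^ (p + 1))",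
                 OF merge_cost_expectation_le]
  by (simp add: pass_cost_expectation)

lemma sum_Suc_mult_power_le:
  fixes r :: real
  assumes "0 \<le> r" "r < 1"
  shows "(\<Sum>p<P. real (p + 1) * r ^ (p + 1)) \<le> r / (1 - r)\<^sup>2"
proof -
  have closed_form: "(\<Sum>p<P. real (p + 1) * r ^ (p + 1)) * (1 - r)\<^sup>2
                       = r - real (P + 1) * r ^ (P + 1) + real P * r ^ (P + 2)" for P
    by (induction P) (simp_all add: algebra_simps power2_eq_square)
  have "real P * r ^ (P + 2) = (real P * r) * r ^ (P + 1)"
    by simp
  also have "\<dots> \<le> real (P + 1) * r ^ (P + 1)"
    using assms mult_left_le[of r "real P"] by (intro mult_right_mono) auto
  finally have "(\<Sum>p<P. real (p + 1) * r ^ (p + 1)) * (1 - r)\<^sup>2 \<le> r"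
    unfolding closed_form by linarith
  then show ?thesis
    using assms by (simp add: pos_le_divide_eq)
qed

lemma pass_merges_mult_block_size:
  assumes "p < m"
  shows "real (2 ^ (m - Suc p)) * 2 ^ (p + 1) = (2 :: real) ^ m"
proof -
  have "m - Suc p + (p + 1) = m"
    using assms by simp
  then show ?thesis
    by (metis of_nat_numeral of_nat_power power_add)
qed

lemma mergeshuffle_pass_expectation_ge:
  assumes "p < m"
  shows "2 ^ m + real (2 ^ (m - Suc p)) \<le> measure_pmf.expectation (pass_cost p (2 ^ (m - Suc p))) real"
  using pass_cost_expectation_ge[of "2 ^ (m - Suc p)" p] pass_merges_mult_block_size[OF assms]
  by (simp add: algebra_simps)

lemma mergeshuffle_pass_expectation_le:
  assumes "p < m"
  shows "measure_pmf.expectation (pass_cost p (2 ^ (m - Suc p))) real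
           \<le> 2 ^ m + 2 ^ m * (real (p + 1) * (1 / sqrt 2) ^ (p + 1))"
proof -
  define s where "s = sqrt 2 ^ (p + 1)"
  define k where "k = real (2 ^ (m - Suc p))"
  have "1 \<le> s"
    unfolding s_def by (rule one_le_power) simp
  have sqrt_eq: "sqrt (2 ^ (p + 1)) = s"
    unfolding s_def by (rule real_sqrt_power)
  have square_eq: "(2 :: real) ^ (p + 1) = s\<^sup>2"
    using real_sqrt_pow2[of "2 ^ (p + 1)"] unfolding sqrt_eq by simp
  have k: "k * s\<^sup>2 = 2 ^ m"
    using pass_merges_mult_block_size[OF assms] square_eq unfolding k_def by simp
  have "1 + real p * s \<le> real (p + 1) * s"
    using \<open>1 \<le> s\<close> by (simp add: algebra_simps)
  then have "k * (1 + real p * s) \<le> k * (real (p + 1) * s)"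
    unfolding k_def by (intro mult_left_mono) auto
  also have "\<dots> = k * s\<^sup>2 * (real (p + 1) / s)"
    using \<open>1 \<le> s\<close> by (simp add: power2_eq_square)
  finally have "k * (1 + real p * s) \<le> k * s\<^sup>2 * (real (p + 1) / s)" .
  moreover have "measure_pmf.expectation (pass_cost p (2 ^ (m - Suc p))) real \<le> k * s\<^sup>2 + k * (1 + real p * s)"
    using pass_cost_expectation_le[of p "2 ^ (m - Suc p)"] \<open>1 \<le> s\<close> unfolding sqrt_eq square_eq k_def
    by (simp add: algebra_simps)
  moreover have "real (p + 1) * (1 / sqrt 2) ^ (p + 1) = real (p + 1) / s"
    unfolding s_def by (simp add: power_one_over)
  ultimately show ?thesis
    unfolding k by (metis add_left_mono order_trans)
qed

lemma mergeshuffle_cost_expectation_ge: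
  assumes "1 \<le> m"
  shows "real m * 2 ^ m + 2 ^ m / 2 \<le> measure_pmf.expectation (mergeshuffle_cost m) real"
proof -
  have "real m * 2 ^ m + 2 ^ m / 2 \<le> (\<Sum>p<m. 2 ^ m + real (2 ^ (m - Suc p)))"
  proof -
    have "(2 :: real) ^ m / 2 = real (2 ^ (m - Suc 0))"
      using assms by (cases m) auto
    also have "\<dots> \<le> (\<Sum>p<m. real (2 ^ (m - Suc p)))"
      using assms by (intro member_le_sum) auto
    finally show ?thesis
      by (simp add: sum.distrib)
  qed
  also have "\<dots> \<le> (\<Sum>p<m. measure_pmf.expectation (pass_cost p (2 ^ (m - Suc p))) real)"
    by (intro sum_mono mergeshuffle_pass_expectation_ge) simp
  finally show ?thesis
    unfolding mergeshuffle_cost_def passes_cost_expectation .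
qed

lemma mergeshuffle_cost_expectation_le:
  "measure_pmf.expectation (mergeshuffle_cost m) real
     \<le> real m * 2 ^ m + 2 ^ m * ((1 / sqrt 2) / (1 - 1 / sqrt 2)\<^sup>2)"
proof -
  have "measure_pmf.expectation (mergeshuffle_cost m) real
          \<le> (\<Sum>p<m. 2 ^ m + 2 ^ m * (real (p + 1) * (1 / sqrt 2) ^ (p + 1)))"
    unfolding mergeshuffle_cost_def passes_cost_expectation
    by (intro sum_mono mergeshuffle_pass_expectation_le) simp
  also have "\<dots> = real m * 2 ^ m + 2 ^ m * (\<Sum>p<m. real (p + 1) * (1 / sqrt 2) ^ (p + 1))"
    by (simp add: sum.distrib sum_distrib_left)
  also have "\<dots> \<le> real m * 2 ^ m + 2 ^ m * ((1 / sqrt 2) / (1 - 1 / sqrt 2)\<^sup>2)"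
    by (intro add_left_mono mult_left_mono sum_Suc_mult_power_le) auto
  finally show ?thesis .
qed

theorem mainTheorem3:
  shows "(\<lambda>m::nat. measure_pmf.expectation (mergeshuffle_cost m) real
            - real (2 ^ m) * log 2 (real (2 ^ m)))
         \<in> \<Theta>(\<lambda>m. real (2 ^ m))"
proof -
  define C :: real where "C = (1 / sqrt 2) / (1 - 1 / sqrt 2)\<^sup>2"
  have "0 < C"
    unfolding C_def by simp
  have bounds: "\<forall>\<^sub>F m in at_top. 1 / 2 * norm (real (2 ^ m))
           \<le> norm (measure_pmf.expectation (mergeshuffle_cost m) real - real (2 ^ m) * log 2 (real (2 ^ m)))
         \<and> norm (measure_pmf.expectation (mergeshuffle_cost m) real - real (2 ^ m) * log 2 (real (2 ^ m)))
           \<le> C * norm (real (2 ^ m))"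
    using eventually_ge_at_top[of 1]
  proof eventually_elim
    case (elim m)
    define D where "D = measure_pmf.expectation (mergeshuffle_cost m) real - 2 ^ m * real m"
    have "2 ^ m / 2 \<le> D" "D \<le> C * 2 ^ m"
      using mergeshuffle_cost_expectation_ge[OF elim] mergeshuffle_cost_expectation_le[of m]
      unfolding D_def C_def by (simp_all add: mult.commute)
    moreover have "0 \<le> D"
      using \<open>2 ^ m / 2 \<le> D\<close> zero_le_power[of "2 :: real" m] by linarith
    moreover have "log 2 (real (2 ^ m)) = real m"
      by (simp add: log_pow_cancel)
    ultimately show ?case
      unfolding D_def by simp
  qed
  show ?thesis
    by (rule bigthetaI'[OF _ \<open>0 < C\<close> bounds]) simp
qed

end
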